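(* Let $S$ be a set of patterns and let $f_n$ denote the number of rooted labeled forests on $[n]$ avoiding $S$. If the limit $L_S=\lim_{n\to\infty}\frac{f_n^{1/n}}{n}$ exists, then $L_S\in\{0\}\cup[e^{-1},1]$.
   Context: A rooted labeled forest on $[n]$ is an unordered forest on $n$ vertices, each component with a distinguished root, with distinct labels from $[n]$. A pattern of length $k$ is a permutation of $[k]$; an instance of it is a sequence of vertices $v_1,\dots,v_k$ with $v_i$ a strict ancestor of $v_{i+1}$ whose labels are in the same relative order as the pattern; a forest avoids $S$ if it contains no instance of any pattern in $S$. *)

theory Defs
  imports Complex_Main
begin

text \<open>A rooted labeled forest on [n] = {1..n} is encoded by its parent map:
  par v = None if v is a root (or v is not in [n]), par v = Some u if u is the parent of v.
  Unordered labeled rooted forests on [n] correspond bijectively to such maps.\<close>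

definition parent_rel :: "(nat \<Rightarrow> nat option) \<Rightarrow> (nat \<times> nat) set" where
  "parent_rel par = {(v, u). par v = Some u}"

definition rooted_forests :: "nat \<Rightarrow> (nat \<Rightarrow> nat option) set" where
  "rooted_forests n = {par.
     (\<forall>v. v \<notin> {1..n} \<longrightarrow> par v = None) \<and>
     (\<forall>v u. par v = Some u \<longrightarrow> u \<in> {1..n}) \<and>
     acyclic (parent_rel par)}"

definition strict_ancestor :: "(nat \<Rightarrow> nat option) \<Rightarrow> nat \<Rightarrow> nat \<Rightarrow> bool" where
  "strict_ancestor par u v \<longleftrightarrow> (v, u) \<in> (parent_rel par)\<^sup>+"

definition is_pattern :: "nat list \<Rightarrow> bool" where
  "is_pattern p \<longleftrightarrow> distinct p \<and> set p = {1..length p}"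

definition is_instance :: "(nat \<Rightarrow> nat option) \<Rightarrow> nat list \<Rightarrow> nat list \<Rightarrow> bool" where
  "is_instance par p vs \<longleftrightarrow> length vs = length p \<and>
     (\<forall>i. Suc i < length vs \<longrightarrow> strict_ancestor par (vs ! i) (vs ! Suc i)) \<and>
     (\<forall>i j. i < length vs \<longrightarrow> j < length vs \<longrightarrow> (vs ! i < vs ! j \<longleftrightarrow> p ! i < p ! j))"

definition contains :: "nat \<Rightarrow> (nat \<Rightarrow> nat option) \<Rightarrow> nat list \<Rightarrow> bool" where
  "contains n par p \<longleftrightarrow> (\<exists>vs. set vs \<subseteq> {1..n} \<and> is_instance par p vs)"

definition avoids :: "nat \<Rightarrow> (nat \<Rightarrow> nat option) \<Rightarrow> nat list set \<Rightarrow> bool" where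
  "avoids n par S \<longleftrightarrow> (\<forall>p\<in>S. \<not> contains n par p)"

definition num_avoiding :: "nat list set \<Rightarrow> nat \<Rightarrow> nat" where
  "num_avoiding S n = card {par \<in> rooted_forests n. avoids n par S}"

end

(* Always f_n <= (n+1)^n, the number of all parent maps, so L <= 1.
   If S has no increasing pattern, all n! forests whose labels increase away from the roots
   avoid S, so f_n >= n! and L >= 1/e; the same holds with "decreasing".
   Otherwise S contains an increasing pattern p and a decreasing pattern q. By Erdos-Szekeres,
   a chain of 2^(|p|+|q|) ancestors contains an instance of p or of q, so every forest avoiding S
   has height less than H = 2^(|p|+|q|). Counting forests level by level (every vertex picks
   its parent on the level above) gives R^n f_n <= H^n n! exp(t_H(R)) for every R > 0, where
   t_H(R) = R exp(R exp(... R exp 0)) is a tower of height H. Hence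
   f_n^(1/n) / n <= (H/R) exp(t_H(R))^(1/n) -> H/R, and L = 0. *)

theory Submission
  imports Defs "HOL-Library.FuncSet" "HOL-Library.Sublist"
begin

lemma power_le_fact_mult_exp:
  fixes x :: real
  assumes "0 \<le> x"
  shows "x ^ n \<le> fact n * exp x"
proof -
  have "(\<Sum>i\<in>{n}. x ^ i /\<^sub>R fact i) \<le> (\<Sum>i. x ^ i /\<^sub>R fact i)"
    by (rule sum_le_suminf) (use exp_converges[of x] assms in \<open>auto simp: sums_iff\<close>)
  then have "x ^ n / fact n \<le> exp x"
    using exp_converges[of x] by (simp add: sums_iff divide_inverse_commute)
  then show ?thesis
    by (simp add: divide_le_eq mult.commute)
qed

lemma root_div_limit_le_one:
  fixes f :: "nat \<Rightarrow> nat"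
  assumes bound: "\<And>n. f n \<le> Suc n ^ n"
    and lim: "(\<lambda>n. root n (real (f n)) / real n) \<longlonglongrightarrow> L"
  shows "L \<le> 1"
proof (rule LIMSEQ_le[OF lim LIMSEQ_Suc_n_over_n])
  have "root n (real (f n)) / real n \<le> real (Suc n) / real n" if "n \<ge> 1" for n
  proof -
    have "root n (real (f n)) \<le> root n (real (Suc n) ^ n)"
      using of_nat_mono[OF bound[of n], where 'a = real] that by (intro real_root_le_mono) simp_all
    then show ?thesis
      using that by (simp add: real_root_power_cancel divide_right_mono)
  qed
  then show "\<exists>N. \<forall>n\<ge>N. root n (real (f n)) / real n \<le> real (Suc n) / real n"
    by blast
qed

lemma root_div_limit_ge_exp_minus_one:
  fixes f :: "nat \<Rightarrow> nat"
  assumes bound: "\<And>n. fact n \<le> f n"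
    and lim: "(\<lambda>n. root n (real (f n)) / real n) \<longlonglongrightarrow> L"
  shows "exp (-1) \<le> L"
proof (rule LIMSEQ_le_const[OF lim])
  have "exp (-1) \<le> root n (real (f n)) / real n" if "n \<ge> 1" for n
  proof -
    have "(real n / exp 1) ^ n \<le> fact n"
      using power_le_fact_mult_exp[of "real n" n]
      by (simp add: power_divide divide_le_eq exp_of_nat_mult[symmetric] mult.commute)
    also have "\<dots> \<le> real (f n)"
      using bound[of n] by (metis of_nat_fact of_nat_le_iff)
    finally have "real n / exp 1 \<le> root n (real (f n))"
      using that real_root_le_mono[of n "(real n / exp 1) ^ n"] by (simp add: real_root_power_cancel)
    then show ?thesis
      using that by (simp add: exp_minus field_simps)
  qed
  then show "\<exists>N. \<forall>n\<ge>N. exp (-1) \<le> root n (real (f n)) / real n"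
    by blast
qed

lemma root_div_limit_eq_zero:
  fixes f :: "nat \<Rightarrow> nat"
  assumes small: "\<And>\<epsilon>. 0 < \<epsilon> \<Longrightarrow> \<exists>c>0. \<forall>n. real (f n) \<le> c * \<epsilon> ^ n * fact n"
    and lim: "(\<lambda>n. root n (real (f n)) / real n) \<longlonglongrightarrow> L"
  shows "L = 0"
proof (rule antisym)
  show "L \<le> 0"
  proof (rule field_le_epsilon)
    fix \<epsilon> :: real assume "0 < \<epsilon>"
    then obtain c where "c > 0" and c: "\<And>n. real (f n) \<le> c * \<epsilon> ^ n * fact n"
      using small by blast
    have "root n (real (f n)) / real n \<le> \<epsilon> * root n c" if "n \<ge> 1" for n
    proof -
      have "c * \<epsilon> ^ n * fact n \<le> c * \<epsilon> ^ n * real (n ^ n)"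
        using \<open>c > 0\<close> \<open>0 < \<epsilon>\<close> by (intro mult_left_mono fact_le_power) simp
      then have "real (f n) \<le> c * (\<epsilon> * n) ^ n"
        using c[of n] by (simp add: power_mult_distrib mult_ac)
      then have "root n (real (f n)) \<le> root n (c * (\<epsilon> * n) ^ n)"
        using that by (intro real_root_le_mono) simp_all
      also have "\<dots> = root n c * (\<epsilon> * n)"
        using that \<open>0 < \<epsilon>\<close> by (simp add: real_root_mult real_root_power_cancel)
      finally have "root n (real (f n)) \<le> root n c * (\<epsilon> * n)" .
      then show ?thesis
        using that by (simp add: divide_le_eq mult_ac)
    qed
    moreover have "(\<lambda>n. \<epsilon> * root n c) \<longlonglongrightarrow> \<epsilon> * 1"
      using \<open>c > 0\<close> by (intro tendsto_mult tendsto_const LIMSEQ_root_const) simp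
    ultimately have "L \<le> \<epsilon> * 1"
      by (intro LIMSEQ_le[OF lim]) blast+
    then show "L \<le> 0 + \<epsilon>"
      by simp
  qed
  show "0 \<le> L"
    by (rule LIMSEQ_le_const[OF lim]) (auto intro!: divide_nonneg_nonneg real_root_ge_zero)
qed

lemma prod_fact_dvd_fact_sum:
  "finite A \<Longrightarrow> (\<Prod>d\<in>A. fact (N d)) dvd (fact (\<Sum>d\<in>A. N d) :: nat)"
proof (induction A rule: finite_induct)
  case (insert x A)
  then have "(\<Prod>d\<in>insert x A. fact (N d)) dvd fact (N x) * (fact (\<Sum>d\<in>A. N d) :: nat)"
    by (simp add: mult_dvd_mono)
  also have "\<dots> dvd fact (N x + (\<Sum>d\<in>A. N d))"
    by (rule fact_fact_dvd_fact)
  finally show ?case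
    using insert by simp
qed simp

lemma prod_fact_le_fact_sum:
  "finite A \<Longrightarrow> (\<Prod>d\<in>A. fact (N d)) \<le> (fact (\<Sum>d\<in>A. N d) :: nat)"
  by (rule dvd_imp_le[OF prod_fact_dvd_fact_sum]) simp_all

fun exp_tower :: "real \<Rightarrow> nat \<Rightarrow> real" where
  "exp_tower R 0 = 0"
| "exp_tower R (Suc k) = R * exp (exp_tower R k)"

(* N d vertices on level d, each with weight R, and N (Suc d) vertices on level d + 1 choosing
   their parents among them: peeling off the top level with x^m <= m! e^x leaves the tower. *)
lemma prod_power_le_fact_exp_tower:
  fixes R :: real and N :: "nat \<Rightarrow> nat"
  assumes "0 \<le> R"
  shows "(\<Prod>d<k. (R * N d) ^ N (Suc d))
           \<le> (\<Prod>d<k. fact (N (Suc d))) * exp (exp_tower R k * N 0)"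
proof (induction k arbitrary: N)
  case (Suc k)
  define F where "F = (\<Prod>d<k. (fact (N (Suc (Suc d))) :: real))"
  have "F \<ge> 0"
    unfolding F_def by (rule prod_nonneg) simp
  have "(\<Prod>d<Suc k. (R * N d) ^ N (Suc d))
          = (R * N 0) ^ N 1 * (\<Prod>d<k. (R * N (Suc d)) ^ N (Suc (Suc d)))"
    unfolding prod.lessThan_Suc_shift by simp
  also have "\<dots> \<le> (R * N 0) ^ N 1 * (F * exp (exp_tower R k * N 1))"
    using Suc.IH[of "\<lambda>d. N (Suc d)"] assms unfolding F_def by (intro mult_left_mono) auto
  also have "\<dots> = (R * N 0 * exp (exp_tower R k)) ^ N 1 * F"
    by (simp add: power_mult_distrib exp_of_nat_mult[symmetric] mult_ac)
  also have "\<dots> \<le> fact (N 1) * exp (R * N 0 * exp (exp_tower R k)) * F"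
    using assms \<open>F \<ge> 0\<close> by (intro mult_right_mono power_le_fact_mult_exp) auto
  also have "\<dots> = (\<Prod>d<Suc k. fact (N (Suc d))) * exp (exp_tower R (Suc k) * N 0)"
    unfolding F_def prod.lessThan_Suc_shift by (simp add: mult_ac)
  finally show ?case .
qed simp

lemma set_subseq: "subseq ys xs \<Longrightarrow> set ys \<subseteq> set xs"
  by (auto elim: list_emb_set)

lemma sorted_wrt_subseq: "subseq ys xs \<Longrightarrow> sorted_wrt P xs \<Longrightarrow> sorted_wrt P ys"
  by (induction rule: list_emb.induct) (auto dest: set_subseq)

lemma sorted_wrt_iff_same_order:
  fixes xs ys :: "nat list"
  assumes P: "P = (<) \<or> P = (>)" and len: "length xs = length ys" and xs: "sorted_wrt P xs"
  shows "sorted_wrt P ys \<longleftrightarrow> (\<forall>i<length xs. \<forall>j<length xs. xs ! i < xs ! j \<longleftrightarrow> ys ! i < ys ! j)"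
proof
  have order_iff_index: "zs ! i < zs ! j \<longleftrightarrow> P i j"
    if "sorted_wrt P zs" "i < length zs" "j < length zs" for zs and i j
    using P that(2,3) by (cases i j rule: linorder_cases) (auto dest: sorted_wrt_nth_less[OF that(1)])
  show "sorted_wrt P ys \<Longrightarrow> \<forall>i<length xs. \<forall>j<length xs. xs ! i < xs ! j \<longleftrightarrow> ys ! i < ys ! j"
    using order_iff_index[OF xs] order_iff_index len by auto
next
  assume "\<forall>i<length xs. \<forall>j<length xs. xs ! i < xs ! j \<longleftrightarrow> ys ! i < ys ! j"
  then show "sorted_wrt P ys"
    using xs P len unfolding sorted_wrt_iff_nth_less by auto
qed

lemma erdos_szekeres_power_two:
  fixes xs :: "'a::linorder list"
  assumes "distinct xs" "2 ^ (a + b) \<le> length xs"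
  shows "\<exists>ys. subseq ys xs \<and>
           (length ys = a \<and> sorted_wrt (<) ys \<or> length ys = b \<and> sorted_wrt (>) ys)"
  using assms
proof (induction "a + b" arbitrary: a b xs rule: less_induct)
  case less
  show ?case
  proof (cases "a = 0 \<or> b = 0")
    case True
    then show ?thesis
      by (intro exI[of _ "[]"]) auto
  next
    case False
    \<comment> \<open>the head splits the tail into larger and smaller entries; one part is long enough\<close>
    then obtain x xs' where xs: "xs = x # xs'"
      using less.prems by (cases xs) auto
    let ?G = "filter (\<lambda>y. x < y) xs'" and ?W = "filter (\<lambda>y. y < x) xs'"
    have "x \<notin> set xs'" "distinct xs'"
      using less.prems xs by auto
    then have "filter (\<lambda>y. \<not> x < y) xs' = ?W"
      by (intro filter_cong) (auto simp: not_less le_less)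
    then have "length ?G + length ?W = length xs'"
      using sum_length_filter_compl[of "\<lambda>y. x < y" xs'] by simp
    moreover obtain k where k: "a + b = Suc k"
      using False by (cases "a + b") auto
    ultimately have "2 * 2 ^ k \<le> length ?G + length ?W + 1"
      using less.prems(2) xs by simp
    then have "2 ^ k \<le> length ?G \<or> 2 ^ k \<le> length ?W"
      by linarith
    moreover have "a - 1 + b = k" "a + (b - 1) = k"
      using False k by auto
    ultimately have "2 ^ (a - 1 + b) \<le> length ?G \<or> 2 ^ (a + (b - 1)) \<le> length ?W"
      by simp
    then show ?thesis
    proof
      assume "2 ^ (a - 1 + b) \<le> length ?G"
      then have "\<exists>ys. subseq ys ?G \<and>
          (length ys = a - 1 \<and> sorted_wrt (<) ys \<or> length ys = b \<and> sorted_wrt (>) ys)"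
        using False \<open>distinct xs'\<close> by (intro less.hyps) auto
      then obtain ys where ys: "subseq ys ?G"
        "length ys = a - 1 \<and> sorted_wrt (<) ys \<or> length ys = b \<and> sorted_wrt (>) ys"
        by blast
      have "subseq ys xs"
        using subseq_order.trans[OF ys(1) subseq_filter_left] xs by (simp add: list_emb_Cons)
      moreover have "subseq (x # ys) xs" "\<forall>y\<in>set ys. x < y"
        using subseq_order.trans[OF ys(1) subseq_filter_left] set_subseq[OF ys(1)] xs by auto
      ultimately show ?thesis
        using ys(2) False by (metis Suc_pred' length_Cons neq0_conv sorted_wrt.simps(2))
    next
      assume "2 ^ (a + (b - 1)) \<le> length ?W"
      then have "\<exists>ys. subseq ys ?W \<and>
          (length ys = a \<and> sorted_wrt (<) ys \<or> length ys = b - 1 \<and> sorted_wrt (>) ys)"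
        using False \<open>distinct xs'\<close> by (intro less.hyps) auto
      then obtain ys where ys: "subseq ys ?W"
        "length ys = a \<and> sorted_wrt (<) ys \<or> length ys = b - 1 \<and> sorted_wrt (>) ys"
        by blast
      have "subseq ys xs"
        using subseq_order.trans[OF ys(1) subseq_filter_left] xs by (simp add: list_emb_Cons)
      moreover have "subseq (x # ys) xs" "\<forall>y\<in>set ys. y < x"
        using subseq_order.trans[OF ys(1) subseq_filter_left] set_subseq[OF ys(1)] xs by auto
      ultimately show ?thesis
        using ys(2) False by (metis Suc_pred' length_Cons neq0_conv sorted_wrt.simps(2))
    qed
  qed
qed

definition parent_maps :: "nat \<Rightarrow> (nat \<Rightarrow> nat option set) \<Rightarrow> (nat \<Rightarrow> nat option) set" where
  "parent_maps n B = {par. (\<forall>v\<in>{1..n}. par v \<in> B v) \<and> (\<forall>v. v \<notin> {1..n} \<longrightarrow> par v = None)}"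

lemma bij_betw_restrict_parent_maps:
  "bij_betw (\<lambda>par. restrict par {1..n}) (parent_maps n B) (\<Pi>\<^sub>E v\<in>{1..n}. B v)"
proof (rule bij_betw_byWitness[where f' = "\<lambda>g v. if v \<in> {1..n} then g v else None"])
qed (auto simp: parent_maps_def fun_eq_iff PiE_def extensional_def)

lemma card_parent_maps: "card (parent_maps n B) = (\<Prod>v\<in>{1..n}. card (B v))"
  using bij_betw_same_card[OF bij_betw_restrict_parent_maps] by (simp add: card_PiE)

lemma finite_parent_maps: "(\<And>v. v \<in> {1..n} \<Longrightarrow> finite (B v)) \<Longrightarrow> finite (parent_maps n B)"
  using bij_betw_finite[OF bij_betw_restrict_parent_maps] by (auto intro: finite_PiE)

lemma rooted_forestsD:
  assumes "par \<in> rooted_forests n"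
  shows "v \<notin> {1..n} \<Longrightarrow> par v = None" and "par v = Some u \<Longrightarrow> u \<in> {1..n}"
    and "acyclic (parent_rel par)"
  using assms unfolding rooted_forests_def by blast+

lemma rooted_forests_subset_parent_maps:
  "rooted_forests n \<subseteq> parent_maps n (\<lambda>_. insert None (Some ` {1..n}))"
proof
  fix par assume "par \<in> rooted_forests n"
  then have "par v \<in> insert None (Some ` {1..n})" for v
    by (cases "par v") (auto dest: rooted_forestsD(2))
  then show "par \<in> parent_maps n (\<lambda>_. insert None (Some ` {1..n}))"
    using rooted_forestsD(1)[OF \<open>par \<in> rooted_forests n\<close>] by (simp add: parent_maps_def)
qed

lemma finite_rooted_forests: "finite (rooted_forests n)"
  by (rule finite_subset[OF rooted_forests_subset_parent_maps finite_parent_maps]) simp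

lemma num_avoiding_le_Suc_power: "num_avoiding S n \<le> Suc n ^ n"
proof -
  have "num_avoiding S n \<le> card (rooted_forests n)"
    unfolding num_avoiding_def by (rule card_mono[OF finite_rooted_forests]) auto
  also have "\<dots> \<le> card (parent_maps n (\<lambda>_. insert None (Some ` {1..n})))"
    by (rule card_mono[OF finite_parent_maps rooted_forests_subset_parent_maps]) simp
  also have "\<dots> = Suc n ^ n"
    by (simp add: card_parent_maps card_image)
  finally show ?thesis .
qed

lemma strict_ancestor_trans:
  "strict_ancestor par u v \<Longrightarrow> strict_ancestor par v w \<Longrightarrow> strict_ancestor par u w"
  unfolding strict_ancestor_def by (rule trancl_trans[rotated])

lemma transp_strict_ancestor: "transp (strict_ancestor par)"
  by (rule transpI) (rule strict_ancestor_trans)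

lemma is_instance_iff:
  "is_instance par p vs \<longleftrightarrow> length vs = length p \<and> sorted_wrt (strict_ancestor par) vs \<and>
     (\<forall>i<length vs. \<forall>j<length vs. vs ! i < vs ! j \<longleftrightarrow> p ! i < p ! j)"
  unfolding is_instance_def sorted_wrt_iff_nth_Suc_transp[OF transp_strict_ancestor] by blast

lemma contains_monotone_pattern:
  assumes "P = (<) \<or> P = (>)" and "sorted_wrt P p" and "sorted_wrt P vs"
    and "sorted_wrt (strict_ancestor par) vs" and "length vs = length p" and "set vs \<subseteq> {1..n}"
  shows "contains n par p"
  using assms sorted_wrt_iff_same_order[OF assms(1,5,3)] by (auto simp: contains_def is_instance_iff)

lemma strict_ancestor_oriented:
  assumes "transp P" and "\<And>v u. par v = Some u \<Longrightarrow> P u v" and "strict_ancestor par u v"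
  shows "P u v"
proof -
  have "(v, u) \<in> (parent_rel par)\<^sup>+"
    using assms(3) by (simp add: strict_ancestor_def)
  then show ?thesis
    by (induction rule: trancl_induct)
      (auto simp: parent_rel_def intro: assms(2) transpD[OF assms(1)])
qed

lemma oriented_parent_maps_avoiding:
  assumes P: "P = (<) \<or> P = (>)" and S: "\<forall>p\<in>S. \<not> sorted_wrt P p"
  shows "parent_maps n (\<lambda>v. insert None (Some ` {u \<in> {1..n}. P u v}))
           \<subseteq> {par \<in> rooted_forests n. avoids n par S}"
proof safe
  fix par assume par: "par \<in> parent_maps n (\<lambda>v. insert None (Some ` {u \<in> {1..n}. P u v}))"
  have parent: "u \<in> {1..n} \<and> P u v" if "par v = Some u" for u v
    using par that unfolding parent_maps_def by (cases "v \<in> {1..n}") force+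
  have "transp P"
    using P by (auto intro: transpI)
  then have oriented: "strict_ancestor par u v \<Longrightarrow> P u v" for u v
    using strict_ancestor_oriented parent by blast
  then have "acyclic (parent_rel par)"
    using P unfolding acyclic_def strict_ancestor_def by blast
  then show "par \<in> rooted_forests n"
    using par parent unfolding parent_maps_def rooted_forests_def by blast
  show "avoids n par S"
    unfolding avoids_def contains_def
  proof safe
    fix p vs assume "p \<in> S" "is_instance par p vs"
    then have "length vs = length p" "sorted_wrt P vs"
      "\<forall>i<length vs. \<forall>j<length vs. vs ! i < vs ! j \<longleftrightarrow> p ! i < p ! j"
      using oriented unfolding is_instance_iff by (auto elim: sorted_wrt_mono_rel[rotated])
    then have "sorted_wrt P p"
      using sorted_wrt_iff_same_order[OF P] by blast
    then show False
      using S \<open>p \<in> S\<close> by blast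
  qed
qed

lemma prod_Suc_card_oriented:
  assumes "P = (<) \<or> P = (>)"
  shows "(\<Prod>v\<in>{1..n}. Suc (card {u \<in> {1..n}. P u v})) = fact n"
  using assms
proof
  assume "P = (<)"
  then have "{u \<in> {1..n}. P u v} = {1..<v}" if "v \<in> {1..n}" for v
    using that by auto
  then have "(\<Prod>v\<in>{1..n}. Suc (card {u \<in> {1..n}. P u v})) = (\<Prod>v\<in>{1..n}. v)"
    by (intro prod.cong) auto
  then show ?thesis
    by (simp add: fact_prod)
next
  assume "P = (>)"
  then have "{u \<in> {1..n}. P u v} = {v<..n}" if "v \<in> {1..n}" for v
    using that by auto
  then have "(\<Prod>v\<in>{1..n}. Suc (card {u \<in> {1..n}. P u v})) = (\<Prod>v\<in>{1..n}. Suc n - v)"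
    by (intro prod.cong) auto
  also have "\<dots> = (\<Prod>v\<in>{1..n}. v)"
    by (rule prod.reindex_bij_witness[where i = "\<lambda>v. Suc n - v" and j = "\<lambda>v. Suc n - v"]) auto
  finally show ?thesis
    by (simp add: fact_prod)
qed

lemma fact_le_num_avoiding:
  assumes "P = (<) \<or> P = (>)" and "\<forall>p\<in>S. \<not> sorted_wrt P p"
  shows "fact n \<le> num_avoiding S n"
proof -
  let ?B = "\<lambda>v. insert None (Some ` {u \<in> {1..n}. P u v})"
  have "fact n = card (parent_maps n ?B)"
    using prod_Suc_card_oriented[OF assms(1)] by (simp add: card_parent_maps card_image)
  also have "\<dots> \<le> num_avoiding S n"
    unfolding num_avoiding_def using oriented_parent_maps_avoiding[OF assms]
    by (intro card_mono) (auto intro: finite_subset[OF _ finite_rooted_forests])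
  finally show ?thesis .
qed

definition depth :: "(nat \<Rightarrow> nat option) \<Rightarrow> nat \<Rightarrow> nat" where
  "depth par v = card {u. strict_ancestor par u v}"

lemma strict_ancestors_root: "par v = None \<Longrightarrow> {u. strict_ancestor par u v} = {}"
  by (auto simp: strict_ancestor_def parent_rel_def dest: tranclD)

lemma strict_ancestors_parent:
  assumes "par v = Some u"
  shows "{w. strict_ancestor par w v} = insert u {w. strict_ancestor par w u}"
proof -
  have "(v, w) \<in> (parent_rel par)\<^sup>+ \<longleftrightarrow> (u, w) \<in> (parent_rel par)\<^sup>*" for w
  proof
    assume "(v, w) \<in> (parent_rel par)\<^sup>+"
    then obtain u' where "(v, u') \<in> parent_rel par" "(u', w) \<in> (parent_rel par)\<^sup>*"
      by (blast dest: tranclD)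
    then show "(u, w) \<in> (parent_rel par)\<^sup>*"
      using assms by (simp add: parent_rel_def)
  next
    assume "(u, w) \<in> (parent_rel par)\<^sup>*"
    then show "(v, w) \<in> (parent_rel par)\<^sup>+"
      using assms by (auto simp: parent_rel_def intro: rtrancl_into_trancl2)
  qed
  then show ?thesis
    by (auto simp: strict_ancestor_def rtrancl_eq_or_trancl)
qed

definition level_parents :: "nat \<Rightarrow> (nat \<Rightarrow> nat) \<Rightarrow> nat \<Rightarrow> nat option set" where
  "level_parents n l v = (if l v = 0 then {None} else Some ` {u \<in> {1..n}. Suc (l u) = l v})"

context
  fixes par and n
  assumes forest: "par \<in> rooted_forests n"
begin

lemma strict_ancestor_in_range:
  assumes "strict_ancestor par u v"
  shows "u \<in> {1..n}"
proof -
  obtain w where "(w, u) \<in> parent_rel par"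
    using assms unfolding strict_ancestor_def by (blast dest: tranclD2)
  then show ?thesis
    using rooted_forestsD(2)[OF forest] by (simp add: parent_rel_def)
qed

lemma strict_ancestor_irrefl: "\<not> strict_ancestor par u u"
  using rooted_forestsD(3)[OF forest] unfolding acyclic_def strict_ancestor_def by blast

lemma finite_strict_ancestors: "finite {u. strict_ancestor par u v}"
  using strict_ancestor_in_range by (blast intro: finite_subset[OF _ finite_atLeastAtMost])

lemma depth_parent:
  assumes "par v = Some u"
  shows "depth par v = Suc (depth par u)"
  unfolding depth_def strict_ancestors_parent[of par v u, OF assms]
  using finite_strict_ancestors strict_ancestor_irrefl by simp

lemma depth_eq_0_iff: "depth par v = 0 \<longleftrightarrow> par v = None"
  using depth_parent strict_ancestors_root by (cases "par v") (auto simp: depth_def)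

lemma ancestor_chain:
  "\<exists>ws. length ws = Suc (depth par v) \<and> sorted_wrt (strict_ancestor par) ws \<and>
     set ws \<subseteq> insert v {u. strict_ancestor par u v}"
proof (induction "depth par v" arbitrary: v)
  case 0
  then show ?case
    by (intro exI[of _ "[v]"]) auto
next
  case (Suc k)
  then obtain u where u: "par v = Some u"
    using depth_eq_0_iff[of v] by (cases "par v") auto
  then obtain ws where ws: "length ws = Suc (depth par u)" "sorted_wrt (strict_ancestor par) ws"
    "set ws \<subseteq> insert u {w. strict_ancestor par w u}"
    using Suc.hyps depth_parent[OF u] by force
  then have "set ws \<subseteq> {w. strict_ancestor par w v}"
    using strict_ancestors_parent[of par v u, OF u] by blast
  with ws show ?case
    using depth_parent[OF u] by (intro exI[of _ "ws @ [v]"]) (auto simp: sorted_wrt_append)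
qed

lemma rooted_forest_in_level_parent_maps:
  "par \<in> parent_maps n (level_parents n (restrict (depth par) {1..n}))"
proof -
  have "par v \<in> level_parents n (restrict (depth par) {1..n}) v" if "v \<in> {1..n}" for v
  proof (cases "par v")
    case None
    then show ?thesis
      using that depth_eq_0_iff by (simp add: level_parents_def)
  next
    case (Some u)
    then show ?thesis
      using that depth_parent rooted_forestsD(2)[OF forest]
      by (auto simp: level_parents_def)
  qed
  then show ?thesis
    using rooted_forestsD(1)[OF forest] by (simp add: parent_maps_def)
qed

lemma depth_less_if_avoids:
  assumes av: "avoids n par S" and v: "v \<in> {1..n}"
    and p: "p \<in> S" "sorted_wrt (<) p" and q: "q \<in> S" "sorted_wrt (>) q"
  shows "depth par v < 2 ^ (length p + length q)"
proof (rule ccontr)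
  assume "\<not> ?thesis"
  moreover obtain ws where ws: "length ws = Suc (depth par v)"
    "sorted_wrt (strict_ancestor par) ws" "set ws \<subseteq> insert v {u. strict_ancestor par u v}"
    using ancestor_chain by blast
  ultimately have ws: "2 ^ (length p + length q) \<le> length ws"
    "sorted_wrt (strict_ancestor par) ws" "set ws \<subseteq> {1..n}"
    using v strict_ancestor_in_range by auto
  have "distinct ws"
    using ws(2) strict_ancestor_irrefl by (induction ws) auto
  then obtain ys where ys: "subseq ys ws"
    "length ys = length p \<and> sorted_wrt (<) ys \<or> length ys = length q \<and> sorted_wrt (>) ys"
    using erdos_szekeres_power_two ws(1) by blast
  have "sorted_wrt (strict_ancestor par) ys" "set ys \<subseteq> {1..n}"
    using sorted_wrt_subseq[OF ys(1) ws(2)] set_subseq[OF ys(1)] ws(3) by auto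
  then have "contains n par p \<or> contains n par q"
    using ys(2) p(2) q(2) contains_monotone_pattern[of "(<)"] contains_monotone_pattern[of "(>)"]
    by blast
  then show False
    using av p(1) q(1) by (auto simp: avoids_def)
qed

end

lemma avoiding_subset_level_parent_maps:
  assumes "p \<in> S" "sorted_wrt (<) p" and "q \<in> S" "sorted_wrt (>) q"
  shows "{par \<in> rooted_forests n. avoids n par S}
           \<subseteq> (\<Union>l \<in> {1..n} \<rightarrow>\<^sub>E {..<2 ^ (length p + length q)}. parent_maps n (level_parents n l))"
proof safe
  fix par assume "par \<in> rooted_forests n" "avoids n par S"
  then have "restrict (depth par) {1..n} \<in> {1..n} \<rightarrow>\<^sub>E {..<2 ^ (length p + length q)}"
    using depth_less_if_avoids assms by auto
  then show "par \<in> (\<Union>l \<in> {1..n} \<rightarrow>\<^sub>E {..<2 ^ (length p + length q)}. parent_maps n (level_parents n l))"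
    using rooted_forest_in_level_parent_maps[OF \<open>par \<in> rooted_forests n\<close>] by blast
qed

lemma card_level_parent_maps_le:
  fixes R :: real
  assumes l: "l \<in> {1..n} \<rightarrow>\<^sub>E {..<H}" and "0 \<le> R"
  shows "R ^ n * card (parent_maps n (level_parents n l)) \<le> fact n * exp (exp_tower R H)"
proof -
  \<comment> \<open>\<open>N (Suc d)\<close> vertices have level \<open>d\<close>; \<open>N 0 = 1\<close> counts the only parent choice \<open>None\<close> of a root\<close>
  define N where "N = case_nat 1 (\<lambda>d. card {v \<in> {1..n}. l v = d})"
  have card_level_parents: "card (level_parents n l v) = N (l v)" for v
    by (cases "l v") (auto simp: level_parents_def N_def card_image)
  have "R ^ n * card (parent_maps n (level_parents n l)) = (\<Prod>v\<in>{1..n}. R * N (l v))"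
    by (simp add: card_parent_maps card_level_parents prod.distrib)
  also have "\<dots> = (\<Prod>d<H. \<Prod>v\<in>{v \<in> {1..n}. l v = d}. R * N (l v))"
    using l by (intro prod.group[symmetric]) auto
  also have "\<dots> = (\<Prod>d<H. (R * N d) ^ N (Suc d))"
    by (simp add: N_def)
  also have "\<dots> \<le> (\<Prod>d<H. fact (N (Suc d))) * exp (exp_tower R H)"
    using prod_power_le_fact_exp_tower[OF \<open>0 \<le> R\<close>, where k = H and N = N] by (simp add: N_def)
  also have "\<dots> \<le> fact (\<Sum>d<H. N (Suc d)) * exp (exp_tower R H)"
  proof (rule mult_right_mono)
    have "(\<Prod>d<H. fact (N (Suc d))) \<le> (fact (\<Sum>d<H. N (Suc d)) :: nat)"
      by (rule prod_fact_le_fact_sum) simp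
    from of_nat_mono[OF this, where 'a = real]
    show "(\<Prod>d<H. fact (N (Suc d))) \<le> (fact (\<Sum>d<H. N (Suc d)) :: real)"
      by (simp only: of_nat_prod of_nat_fact)
  qed simp
  also have "(\<Sum>d<H. N (Suc d)) = n"
  proof -
    have "(\<Sum>d<H. N (Suc d)) = (\<Sum>d<H. \<Sum>v\<in>{v \<in> {1..n}. l v = d}. 1)"
      by (simp add: N_def)
    also have "\<dots> = (\<Sum>v\<in>{1..n}. 1)"
      using l by (intro sum.group) auto
    finally show ?thesis
      by simp
  qed
  finally show ?thesis .
qed

lemma num_avoiding_le_exp_tower:
  fixes R :: real
  assumes "p \<in> S" "sorted_wrt (<) p" and "q \<in> S" "sorted_wrt (>) q" and "0 \<le> R"
  defines "H \<equiv> 2 ^ (length p + length q)"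
  shows "R ^ n * num_avoiding S n \<le> real H ^ n * fact n * exp (exp_tower R H)"
proof -
  let ?L = "{1..n} \<rightarrow>\<^sub>E {..<H}"
  have "num_avoiding S n \<le> card (\<Union>l\<in>?L. parent_maps n (level_parents n l))"
    unfolding num_avoiding_def H_def using avoiding_subset_level_parent_maps[OF assms(1-4)]
    by (intro card_mono) (auto intro!: finite_parent_maps simp: level_parents_def finite_PiE)
  also have "\<dots> \<le> (\<Sum>l\<in>?L. card (parent_maps n (level_parents n l)))"
    by (rule card_UN_le) (simp add: finite_PiE)
  finally have "real (num_avoiding S n) \<le> (\<Sum>l\<in>?L. real (card (parent_maps n (level_parents n l))))"
    unfolding of_nat_sum[symmetric] of_nat_le_iff .
  then have "R ^ n * num_avoiding S n \<le> R ^ n * (\<Sum>l\<in>?L. real (card (parent_maps n (level_parents n l))))"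
    using \<open>0 \<le> R\<close> by (intro mult_left_mono) simp_all
  also have "\<dots> = (\<Sum>l\<in>?L. R ^ n * card (parent_maps n (level_parents n l)))"
    by (simp add: sum_distrib_left)
  also have "\<dots> \<le> (\<Sum>l\<in>?L. fact n * exp (exp_tower R H))"
    using card_level_parent_maps_le \<open>0 \<le> R\<close> by (intro sum_mono) auto
  also have "\<dots> = real H ^ n * fact n * exp (exp_tower R H)"
    by (simp add: card_PiE)
  finally show ?thesis .
qed

lemma num_avoiding_le_fact_small_power:
  assumes "p \<in> S" "sorted_wrt (<) p" and "q \<in> S" "sorted_wrt (>) q" and "0 < \<epsilon>"
  shows "\<exists>c>0. \<forall>n. real (num_avoiding S n) \<le> c * \<epsilon> ^ n * fact n"
proof (intro exI conjI allI)
  define H :: nat where "H = 2 ^ (length p + length q)"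
  define R where "R = H / \<epsilon>"
  have "0 < R"
    using \<open>0 < \<epsilon>\<close> by (simp add: R_def H_def)
  show "0 < exp (exp_tower R H)"
    by simp
  fix n
  have "R ^ n * num_avoiding S n \<le> real H ^ n * fact n * exp (exp_tower R H)"
    using num_avoiding_le_exp_tower[OF assms(1-4)] \<open>0 < R\<close> unfolding H_def by simp
  also have "\<dots> = R ^ n * (exp (exp_tower R H) * \<epsilon> ^ n * fact n)"
    using \<open>0 < \<epsilon>\<close> by (simp add: R_def power_divide)
  finally show "real (num_avoiding S n) \<le> exp (exp_tower R H) * \<epsilon> ^ n * fact n"
    using \<open>0 < R\<close> by simp
qed

theorem corollary5p10:
  fixes S :: "nat list set" and L :: real
  assumes "\<forall>p\<in>S. is_pattern p"
    and "(\<lambda>n. root n (real (num_avoiding S n)) / real n) \<longlonglongrightarrow> L"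
  shows "L = 0 \<or> (exp (-1) \<le> L \<and> L \<le> 1)"
proof (cases "(\<exists>p\<in>S. sorted_wrt (<) p) \<and> (\<exists>q\<in>S. sorted_wrt (>) q)")
  case True
  then obtain p q where "p \<in> S" "sorted_wrt (<) p" "q \<in> S" "sorted_wrt (>) q"
    by blast
  then have "L = 0"
    using num_avoiding_le_fact_small_power by (intro root_div_limit_eq_zero[OF _ assms(2)])
  then show ?thesis ..
next
  case False
  then have "fact n \<le> num_avoiding S n" for n
    using fact_le_num_avoiding by blast
  then have "exp (-1) \<le> L"
    by (rule root_div_limit_ge_exp_minus_one[OF _ assms(2)])
  moreover have "L \<le> 1"
    using num_avoiding_le_Suc_power by (rule root_div_limit_le_one[OF _ assms(2)])
  ultimately show ?thesis
    by simp
qed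

end
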